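(* The full subcategory $\mathsf{PreComp}\subseteq\mathsf{sSet}^+$ of pre-complicial sets is closed under the Gray tensor product: if $X$ and $Y$ are pre-complicial, then so is $X\otimes Y$.
   Context: A marked simplicial set is a simplicial set $X$ with a set of marked simplices of positive dimension containing all degenerate simplices; maps preserve marked simplices; category $\mathsf{sSet}^+$. Simplicial operators act on the right; $\delta_k$ denotes the $k$-th face operator. For $n\ge1$ and $0\le k\le n$, $\Delta^n_k$ is $\Delta^n$ in which a non-degenerate simplex is marked iff it contains all vertices in $\{k-1,k,k+1\}\cap[n]$. For $n\ge2$, $(\Delta^n_k)''$ is $\Delta^n_k$ with additionally all $(n-1)$-simplices marked, and $(\Delta^n_k)'$ is $\Delta^n_k$ with additionally all $(n-1)$-faces other than $\delta_k$ marked. A pre-complicial set is a marked simplicial set with the right lifting property with respect to all inclusions $(\Delta^n_k)'\to(\Delta^n_k)''$; $\mathsf{PreComp}$ is the full subcategory of these. For $0\le p\le n$ with $p+q=n$, let $\lfloor p\rfloor\colon[p]\to[n]$ be $i\mapsto i$ and $\lceil q\rceil\colon[q]\to[n]$ be $i\mapsto p+i$. For $X,Y\in\mathsf{sSet}^+$ and $(x,y)\in X_n\times Y_n$, $(x,y)$ is $i$-cloven ($0\le i\le n$) if $x\lfloor i\rfloor$ is marked in $X$ or $y\lceil n-i\rceil$ is marked in $Y$ (note $0$-simplices are never marked). The Gray tensor product $X\otimes Y$ has underlying simplicial set $X\times Y$, with $(x,y)$ marked iff it is $i$-cloven for every $0\le i\le n$. *)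

theory Defs
  imports Main
begin

text \<open>Simplicial operators \<alpha> : [m] \<rightarrow> [n] are monotone maps, represented by
  HOL functions nat \<Rightarrow> nat whose values outside {0..m} are irrelevant.
  Operators act on the right: act X n m x \<alpha> is x\<alpha>, for x an n-simplex.\<close>

definition is_op :: "nat \<Rightarrow> nat \<Rightarrow> (nat \<Rightarrow> nat) \<Rightarrow> bool" where
  "is_op m n \<alpha> \<longleftrightarrow> (\<forall>i j. i \<le> j \<and> j \<le> m \<longrightarrow> \<alpha> i \<le> \<alpha> j) \<and> (\<forall>i\<le>m. \<alpha> i \<le> n)"

record 'a msset =
  simp :: "nat \<Rightarrow> 'a set"
  act  :: "nat \<Rightarrow> nat \<Rightarrow> 'a \<Rightarrow> (nat \<Rightarrow> nat) \<Rightarrow> 'a"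
  mark :: "nat \<Rightarrow> 'a set"

definition is_sset :: "'a msset \<Rightarrow> bool" where
  "is_sset X \<longleftrightarrow>
     (\<forall>n m x \<alpha>. x \<in> simp X n \<longrightarrow> is_op m n \<alpha> \<longrightarrow> act X n m x \<alpha> \<in> simp X m) \<and>
     (\<forall>n x. x \<in> simp X n \<longrightarrow> act X n n x (\<lambda>i. i) = x) \<and>
     (\<forall>n m k x \<alpha> \<beta>. x \<in> simp X n \<longrightarrow> is_op m n \<alpha> \<longrightarrow> is_op k m \<beta> \<longrightarrow>
         act X m k (act X n m x \<alpha>) \<beta> = act X n k x (\<alpha> \<circ> \<beta>)) \<and>
     (\<forall>n m x \<alpha> \<alpha>'. x \<in> simp X n \<longrightarrow> (\<forall>i\<le>m. \<alpha> i = \<alpha>' i) \<longrightarrow>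
         act X n m x \<alpha> = act X n m x \<alpha>')"

definition degenerate :: "'a msset \<Rightarrow> nat \<Rightarrow> 'a \<Rightarrow> bool" where
  "degenerate X n x \<longleftrightarrow>
     (\<exists>m<n. \<exists>y\<in>simp X m. \<exists>\<sigma>. is_op n m \<sigma> \<and> x = act X m n y \<sigma>)"

definition is_msset :: "'a msset \<Rightarrow> bool" where
  "is_msset X \<longleftrightarrow> is_sset X \<and> (\<forall>n. mark X n \<subseteq> simp X n) \<and> mark X 0 = {} \<and>
     (\<forall>n x. x \<in> simp X n \<longrightarrow> degenerate X n x \<longrightarrow> x \<in> mark X n)"

definition smap :: "'a msset \<Rightarrow> 'b msset \<Rightarrow> (nat \<Rightarrow> 'a \<Rightarrow> 'b) \<Rightarrow> bool" where
  "smap A X f \<longleftrightarrow>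
     (\<forall>m a. a \<in> simp A m \<longrightarrow> f m a \<in> simp X m) \<and>
     (\<forall>n m a \<alpha>. a \<in> simp A n \<longrightarrow> is_op m n \<alpha> \<longrightarrow>
         f m (act A n m a \<alpha>) = act X n m (f n a) \<alpha>) \<and>
     (\<forall>m a. a \<in> mark A m \<longrightarrow> f m a \<in> mark X m)"

definition rlp :: "'a msset \<Rightarrow> 'c msset \<Rightarrow> (nat \<Rightarrow> 'a \<Rightarrow> 'c) \<Rightarrow> 'b msset \<Rightarrow> bool" where
  "rlp A B i X \<longleftrightarrow>
     (\<forall>f. smap A X f \<longrightarrow> (\<exists>g. smap B X g \<and> (\<forall>m a. a \<in> simp A m \<longrightarrow> g m (i m a) = f m a)))"

text \<open>The standard simplex \<Delta>^n: m-simplices are the operators [m] \<rightarrow> [n],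
  normalised to be 0 outside {0..m}.\<close>
definition dsimp :: "nat \<Rightarrow> nat \<Rightarrow> (nat \<Rightarrow> nat) set" where
  "dsimp n m = {\<alpha>. is_op m n \<alpha> \<and> (\<forall>j>m. \<alpha> j = 0)}"

definition dact :: "nat \<Rightarrow> nat \<Rightarrow> (nat \<Rightarrow> nat) \<Rightarrow> (nat \<Rightarrow> nat) \<Rightarrow> (nat \<Rightarrow> nat)" where
  "dact p m \<alpha> \<beta> = (\<lambda>j. if j \<le> m then \<alpha> (\<beta> j) else 0)"

definition mark_nk :: "nat \<Rightarrow> nat \<Rightarrow> nat \<Rightarrow> (nat \<Rightarrow> nat) set" where
  "mark_nk n k m = {\<alpha> \<in> dsimp n m. 0 < m \<and>
      (\<not> inj_on \<alpha> {0..m} \<or> {j. j \<le> n \<and> k \<le> j + 1 \<and> j \<le> k + 1} \<subseteq> \<alpha> ` {0..m})}"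

definition Delta_nk :: "nat \<Rightarrow> nat \<Rightarrow> (nat \<Rightarrow> nat) msset" where
  "Delta_nk n k = \<lparr>simp = dsimp n, act = (\<lambda>p m. dact p m), mark = mark_nk n k\<rparr>"

definition Delta_nk_dd :: "nat \<Rightarrow> nat \<Rightarrow> (nat \<Rightarrow> nat) msset" where
  "Delta_nk_dd n k = \<lparr>simp = dsimp n, act = (\<lambda>p m. dact p m),
     mark = (\<lambda>m. mark_nk n k m \<union> (if m = n - 1 then dsimp n m else {}))\<rparr>"

text \<open>(\<Delta>^n_k)': additionally all (n-1)-faces other than \<delta>_k marked; the face
  \<delta>_j is the injective operator [n-1] \<rightarrow> [n] whose image omits j.\<close>
definition Delta_nk_d :: "nat \<Rightarrow> nat \<Rightarrow> (nat \<Rightarrow> nat) msset" where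
  "Delta_nk_d n k = \<lparr>simp = dsimp n, act = (\<lambda>p m. dact p m),
     mark = (\<lambda>m. mark_nk n k m \<union>
        (if m = n - 1 then {\<alpha> \<in> dsimp n m. \<exists>j\<le>n. j \<noteq> k \<and> inj_on \<alpha> {0..m} \<and>
                                  \<alpha> ` {0..m} = {0..n} - {j}} else {}))\<rparr>"

definition pre_complicial :: "'a msset \<Rightarrow> bool" where
  "pre_complicial X \<longleftrightarrow> is_msset X \<and>
     (\<forall>n k. 2 \<le> n \<longrightarrow> k \<le> n \<longrightarrow> rlp (Delta_nk_d n k) (Delta_nk_dd n k) (\<lambda>m a. a) X)"

definition cloven :: "'a msset \<Rightarrow> 'b msset \<Rightarrow> nat \<Rightarrow> nat \<Rightarrow> 'a \<times> 'b \<Rightarrow> bool" where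
  "cloven X Y n i xy \<longleftrightarrow>
     act X n i (fst xy) (\<lambda>j. j) \<in> mark X i \<or> act Y n (n - i) (snd xy) (\<lambda>j. i + j) \<in> mark Y (n - i)"

definition gray :: "'a msset \<Rightarrow> 'b msset \<Rightarrow> ('a \<times> 'b) msset" where
  "gray X Y = \<lparr>simp = (\<lambda>n. simp X n \<times> simp Y n),
     act = (\<lambda>n m xy \<alpha>. (act X n m (fst xy) \<alpha>, act Y n m (snd xy) \<alpha>)),
     mark = (\<lambda>n. {xy \<in> simp X n \<times> simp Y n. \<forall>i\<le>n. cloven X Y n i xy})\<rparr>"

end

theory Submission
  imports Defs
begin

text \<open>A lifting problem for X \<otimes> Y against (\<Delta>^n_k)' \<rightarrow> (\<Delta>^n_k)'' is an n-simplex (x, y) all of whose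
  marked-in-(\<Delta>^n_k)' faces are marked; what has to be shown is that the face \<delta>_k is marked, i.e.
  that for every vertex s \<noteq> k the front face of x ending at s or the back face of y starting at s
  (both spanned by vertices \<noteq> k) is marked. Each marked face of (\<Delta>^n_k)' yields such a dichotomy
  for its own vertex set, and a horn filler in X or Y on an interval of vertices propagates
  markings; according as s < k - 1, s = k - 1, s = k + 1 or s > k + 1 one fills a horn on an
  interval through k in X or in Y, whichever of the two alternatives is not already known.\<close>

section \<open>Simplicial operators and faces\<close>

lemma act_in_simp: "is_sset X \<Longrightarrow> x \<in> simp X n \<Longrightarrow> is_op m n \<alpha> \<Longrightarrow> act X n m x \<alpha> \<in> simp X m"
  unfolding is_sset_def by blast

lemma act_id: "is_sset X \<Longrightarrow> x \<in> simp X n \<Longrightarrow> act X n n x (\<lambda>i. i) = x"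
  unfolding is_sset_def by blast

lemma act_act: "is_sset X \<Longrightarrow> x \<in> simp X n \<Longrightarrow> is_op m n \<alpha> \<Longrightarrow> is_op k m \<beta> \<Longrightarrow>
    act X m k (act X n m x \<alpha>) \<beta> = act X n k x (\<alpha> \<circ> \<beta>)"
  unfolding is_sset_def by blast

lemma act_cong: "is_sset X \<Longrightarrow> x \<in> simp X n \<Longrightarrow> (\<And>i. i \<le> m \<Longrightarrow> \<alpha> i = \<alpha>' i) \<Longrightarrow>
    act X n m x \<alpha> = act X n m x \<alpha>'"
  unfolding is_sset_def by blast

lemma is_msset_is_sset: "is_msset X \<Longrightarrow> is_sset X"
  unfolding is_msset_def by simp

lemma op_strict_mono:
  assumes "is_op m n \<alpha>" "inj_on \<alpha> {0..m}" "i < j" "j \<le> m"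
  shows "\<alpha> i < \<alpha> j"
proof -
  have "\<alpha> i \<le> \<alpha> j" using assms unfolding is_op_def by auto
  moreover have "\<alpha> i \<noteq> \<alpha> j" using assms(2-4) unfolding inj_on_def by fastforce
  ultimately show ?thesis by simp
qed

lemma card_inj_image_atLeastAtMost:
  assumes "inj_on \<alpha> {0..m}" shows "card (\<alpha> ` {0..m}) = Suc m"
  using card_image[OF assms] by simp

lemma not_inj_op_adjacent_eq:
  assumes "is_op q p \<alpha>" "\<not> inj_on \<alpha> {0..q}"
  shows "\<exists>j<q. \<alpha> j = \<alpha> (Suc j)"
proof -
  obtain a b where ab: "a < b" "b \<le> q" "\<alpha> a = \<alpha> b"
    using assms(2) unfolding inj_on_def by (metis atLeastAtMost_iff nat_neq_iff)
  have mono: "\<forall>i j. i \<le> j \<and> j \<le> q \<longrightarrow> \<alpha> i \<le> \<alpha> j" using assms(1) unfolding is_op_def by blast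
  have "\<alpha> a \<le> \<alpha> (Suc a)" "\<alpha> (Suc a) \<le> \<alpha> b"
    using mono[rule_format, of a "Suc a"] mono[rule_format, of "Suc a" b] ab by simp_all
  then show ?thesis using ab by (intro exI[of _ a]) auto
qed

text \<open>A non-injective operator factors through a codegeneracy, so it produces degenerate simplices.\<close>
lemma act_marked_if_not_inj:
  assumes "is_msset X" "w \<in> simp X p" "is_op q p \<alpha>" "\<not> inj_on \<alpha> {0..q}"
  shows "act X p q w \<alpha> \<in> mark X q"
proof -
  obtain j where j: "j < q" "\<alpha> j = \<alpha> (Suc j)" using not_inj_op_adjacent_eq[OF assms(3,4)] by blast
  define \<beta> where "\<beta> = (\<lambda>i. if i \<le> j then \<alpha> i else \<alpha> (Suc i))"
  define \<sigma> where "\<sigma> = (\<lambda>i::nat. if i \<le> j then i else i - 1)"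
  have ss: "is_sset X" using assms(1) by (rule is_msset_is_sset)
  have m: "\<And>i i'. i \<le> i' \<Longrightarrow> i' \<le> q \<Longrightarrow> \<alpha> i \<le> \<alpha> i'" and bd: "\<And>i. i\<le>q \<Longrightarrow> \<alpha> i \<le> p"
    using assms(3) unfolding is_op_def by blast+
  have b: "is_op (q - 1) p \<beta>" unfolding is_op_def
  proof (intro conjI allI impI)
    fix i i' assume a: "i \<le> i' \<and> i' \<le> q - 1"
    show "\<beta> i \<le> \<beta> i'"
    proof (cases "i' \<le> j")
      case True then show ?thesis using a m[of i i'] j unfolding \<beta>_def by auto
    next
      case False
      then have "\<beta> i' = \<alpha> (Suc i')" unfolding \<beta>_def by simp
      moreover have "\<beta> i \<le> \<alpha> (Suc i')"
        using a m[of i "Suc i'"] m[of "Suc i" "Suc i'"] j unfolding \<beta>_def by auto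
      ultimately show ?thesis by simp
    qed
  next
    fix i assume "i \<le> q - 1"
    then show "\<beta> i \<le> p" using bd[of i] bd[of "Suc i"] j unfolding \<beta>_def by auto
  qed
  have s: "is_op q (q - 1) \<sigma>" using j unfolding is_op_def \<sigma>_def by auto
  have eq: "\<alpha> i = (\<beta> \<circ> \<sigma>) i" if "i \<le> q" for i
  proof (cases "i \<le> j")
    case True then show ?thesis unfolding \<beta>_def \<sigma>_def by simp
  next
    case False
    then obtain i0 where i0: "i = Suc i0" "j \<le> i0" by (metis not_le Suc_le_eq lessE)
    then show ?thesis using j unfolding \<beta>_def \<sigma>_def by (cases "i0 = j") auto
  qed
  have "act X p q w \<alpha> = act X p q w (\<beta> \<circ> \<sigma>)" using act_cong[OF ss assms(2)] eq by blast
  also have "\<dots> = act X (q - 1) q (act X p (q - 1) w \<beta>) \<sigma>"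
    using act_act[OF ss assms(2) b s] by simp
  finally have "degenerate X q (act X p q w \<alpha>)"
    unfolding degenerate_def using act_in_simp[OF ss assms(2) b] s j by (intro exI[of _ "q - 1"]) auto
  moreover have "act X p q w \<alpha> \<in> simp X q" using act_in_simp[OF ss assms(2,3)] .
  ultimately show ?thesis using assms(1) unfolding is_msset_def by blast
qed

text \<open>face_marked X n x T: the face of x spanned by the vertex set T is marked. Past the end of T,
  enum_of T takes the junk value 0.\<close>
definition enum_of :: "nat set \<Rightarrow> nat \<Rightarrow> nat" where
  "enum_of T j = (if j < card T then sorted_list_of_set T ! j else 0)"

definition face_marked :: "'a msset \<Rightarrow> nat \<Rightarrow> 'a \<Rightarrow> nat set \<Rightarrow> bool" where
  "face_marked X n x T \<longleftrightarrow> act X n (card T - 1) x (enum_of T) \<in> mark X (card T - 1)"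

lemma enum_of_enumerates:
  assumes f: "finite T" and ne: "T \<noteq> {}" and sub: "T \<subseteq> {0..n}"
  shows "is_op (card T - 1) n (enum_of T)" "inj_on (enum_of T) {0..card T - 1}"
    "enum_of T ` {0..card T - 1} = T" "enum_of T \<in> dsimp n (card T - 1)"
proof -
  define L where "L = sorted_list_of_set T"
  have len: "length L = card T" unfolding L_def by simp
  have srt: "sorted_wrt (<) L" unfolding L_def by simp
  have setL: "set L = T" unfolding L_def using f by simp
  have cp: "0 < card T" using f ne by (simp add: card_gt_0_iff)
  have en: "\<And>j. j \<le> card T - 1 \<Longrightarrow> enum_of T j = L ! j" unfolding enum_of_def L_def using cp by auto
  have lt: "enum_of T i < enum_of T j" if ij: "i < j" "j \<le> card T - 1" for i j
    using sorted_wrt_nth_less[OF srt ij(1)] en[of i] en[of j] ij len cp by simp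
  have inT: "enum_of T j \<in> T" if "j \<le> card T - 1" for j
    using nth_mem[of j L] en[OF that] setL that len cp by simp
  show op: "is_op (card T - 1) n (enum_of T)" unfolding is_op_def
  proof (intro conjI allI impI)
    fix i j assume "i \<le> j \<and> j \<le> card T - 1" then show "enum_of T i \<le> enum_of T j"
      using lt[of i j] by (cases "i = j") auto
  next
    fix i assume "i \<le> card T - 1" then show "enum_of T i \<le> n" using inT sub by fastforce
  qed
  show "inj_on (enum_of T) {0..card T - 1}" unfolding inj_on_def
    by (metis atLeastAtMost_iff lt less_irrefl linorder_cases)
  show "enum_of T ` {0..card T - 1} = T"
  proof
    show "enum_of T ` {0..card T - 1} \<subseteq> T" using inT by auto
  next
    show "T \<subseteq> enum_of T ` {0..card T - 1}"
    proof
      fix t assume "t \<in> T"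
      then obtain i where "i < length L" "t = L ! i" using setL by (metis in_set_conv_nth)
      then have "i \<in> {0..card T - 1}" "t = enum_of T i" using len en by auto
      then show "t \<in> enum_of T ` {0..card T - 1}" by blast
    qed
  qed
  show "enum_of T \<in> dsimp n (card T - 1)" unfolding dsimp_def using op by (auto simp: enum_of_def)
qed

lemma sorted_list_of_set_op_image:
  assumes "is_op m n \<alpha>" "inj_on \<alpha> {0..m}"
  shows "sorted_list_of_set (\<alpha> ` {0..m}) = map \<alpha> [0..<Suc m]"
proof -
  have "sorted_wrt (<) (map \<alpha> [0..<Suc m])"
    unfolding sorted_wrt_map
    by (rule sorted_wrt_mono_rel[OF _ sorted_wrt_upt]) (use op_strict_mono[OF assms] in auto)
  moreover have "set (map \<alpha> [0..<Suc m]) = \<alpha> ` {0..m}"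
    by (simp only: set_map set_upt atLeastLessThanSuc_atLeastAtMost)
  moreover have "length (map \<alpha> [0..<Suc m]) = card (\<alpha> ` {0..m})"
    using card_image[OF assms(2)] by simp
  ultimately show ?thesis
    using sorted_list_of_set_unique[of "\<alpha> ` {0..m}" "map \<alpha> [0..<Suc m]"] by blast
qed

lemma enum_of_op_image:
  assumes "is_op m n \<alpha>" "inj_on \<alpha> {0..m}" "j \<le> m"
  shows "enum_of (\<alpha> ` {0..m}) j = \<alpha> j"
  unfolding enum_of_def
  using sorted_list_of_set_op_image[OF assms(1,2)] card_inj_image_atLeastAtMost[OF assms(2)] assms(3)
  by (simp del: upt_Suc add: nth_map_upt)

lemma act_marked_iff_face_marked:
  assumes "is_sset X" "x \<in> simp X n" "is_op m n \<alpha>" "inj_on \<alpha> {0..m}"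
  shows "act X n m x \<alpha> \<in> mark X m \<longleftrightarrow> face_marked X n x (\<alpha> ` {0..m})"
proof -
  have c: "card (\<alpha> ` {0..m}) - 1 = m" using card_inj_image_atLeastAtMost[OF assms(4)] by simp
  have "act X n m x \<alpha> = act X n m x (enum_of (\<alpha> ` {0..m}))"
    using act_cong[OF assms(1,2)] enum_of_op_image[OF assms(3,4)] by metis
  then show ?thesis unfolding face_marked_def c by simp
qed

section \<open>Horn filling on interval faces\<close>

lemma image_plus_eq: "(\<lambda>t. (a::nat) + t) ` S = {t. a \<le> t \<and> t - a \<in> S}"
  by (auto simp: image_iff) (metis le_add_diff_inverse)

text \<open>Restricting x to the interval face {a..b} turns a marked simplex of (\<Delta>^(b-a)_(u-a))' into one of
  the two kinds of marked faces assumed in the horn-filling lemma below.\<close>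
lemma face_marked_shifted_mark:
  assumes "a \<le> u" "u \<le> b"
    and marked_K: "\<And>T. T \<subseteq> {a..b} \<Longrightarrow> 2 \<le> card T \<Longrightarrow>
      {t. a \<le> t \<and> t \<le> b \<and> u \<le> t+1 \<and> t \<le> u+1} \<subseteq> T \<Longrightarrow> face_marked X n x T"
    and marked_faces: "\<And>v. a \<le> v \<Longrightarrow> v \<le> b \<Longrightarrow> v \<noteq> u \<Longrightarrow> face_marked X n x ({a..b}-{v})"
    and \<beta>: "\<beta> \<in> mark (Delta_nk_d (b - a) (u - a)) m" "inj_on \<beta> {0..m}"
  shows "face_marked X n x ((\<lambda>j. a + \<beta> j) ` {0..m})"
proof -
  define p h where "p = b - a" and "h = u - a"
  have img: "(\<lambda>j. a + \<beta> j) ` {0..m} = (\<lambda>t. a + t) ` (\<beta> ` {0..m})" by (simp add: image_image)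
  have "\<beta> \<in> dsimp p m" using \<beta>(1) unfolding Delta_nk_d_def mark_nk_def p_def h_def by (auto split: if_splits)
  then have bsub: "\<beta> ` {0..m} \<subseteq> {0..p}" unfolding dsimp_def is_op_def by auto
  show ?thesis
  proof (cases "\<beta> \<in> mark_nk p h m")
    case True
    then have m0: "0 < m" and Kb: "{j. j \<le> p \<and> h \<le> j + 1 \<and> j \<le> h + 1} \<subseteq> \<beta> ` {0..m}"
      using \<beta>(2) unfolding mark_nk_def by auto
    have "inj_on (\<lambda>j. a + \<beta> j) {0..m}" using \<beta>(2) unfolding inj_on_def by auto
    then have "2 \<le> card ((\<lambda>j. a + \<beta> j) ` {0..m})"
      using card_inj_image_atLeastAtMost[of "\<lambda>j. a + \<beta> j" m] m0 by simp
    moreover have "(\<lambda>j. a + \<beta> j) ` {0..m} \<subseteq> {a..b}" using bsub assms(1,2) unfolding p_def by auto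
    moreover have "{t. a \<le> t \<and> t \<le> b \<and> u \<le> t + 1 \<and> t \<le> u + 1} \<subseteq> (\<lambda>j. a + \<beta> j) ` {0..m}"
      unfolding img image_plus_eq using Kb assms(1,2) unfolding p_def h_def by auto
    ultimately show ?thesis using marked_K by blast
  next
    case False
    then obtain j where j: "j \<le> p" "j \<noteq> h" "\<beta> ` {0..m} = {0..p} - {j}"
      using \<beta>(1) unfolding Delta_nk_d_def p_def h_def by (auto split: if_splits)
    have "(\<lambda>j. a + \<beta> j) ` {0..m} = {a..b} - {a + j}"
      unfolding img image_plus_eq j(3) using assms(1,2) unfolding p_def by auto
    then show ?thesis using marked_faces[of "a + j"] j assms(1,2) unfolding p_def h_def by auto
  qed
qed

lemma smap_shifted_face:
  assumes X: "is_msset X" and x: "x \<in> simp X n" and "a \<le> u" "u \<le> b" "b \<le> n"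
    and marked_K: "\<And>T. T \<subseteq> {a..b} \<Longrightarrow> 2 \<le> card T \<Longrightarrow>
      {t. a \<le> t \<and> t \<le> b \<and> u \<le> t+1 \<and> t \<le> u+1} \<subseteq> T \<Longrightarrow> face_marked X n x T"
    and marked_faces: "\<And>v. a \<le> v \<Longrightarrow> v \<le> b \<Longrightarrow> v \<noteq> u \<Longrightarrow> face_marked X n x ({a..b}-{v})"
  shows "smap (Delta_nk_d (b - a) (u - a)) X (\<lambda>m \<beta>. act X n m x (\<lambda>j. a + \<beta> j))"
  unfolding smap_def
proof (intro conjI allI impI)
  have ss: "is_sset X" using X by (rule is_msset_is_sset)
  have shift_op: "is_op m n (\<lambda>j. a + \<beta> j)" if "is_op m (b - a) \<beta>" for m \<beta>
    using that assms(3-5) unfolding is_op_def by auto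
  {
    fix m \<beta> assume "\<beta> \<in> simp (Delta_nk_d (b - a) (u - a)) m"
    then have "is_op m (b - a) \<beta>" unfolding Delta_nk_d_def dsimp_def by simp
    then show "act X n m x (\<lambda>j. a + \<beta> j) \<in> simp X m" using act_in_simp[OF ss x shift_op] by blast
  next
    fix q m \<beta> \<gamma> assume "\<beta> \<in> simp (Delta_nk_d (b - a) (u - a)) q" and \<gamma>: "is_op m q \<gamma>"
    then have \<beta>: "is_op q (b - a) \<beta>" unfolding Delta_nk_d_def dsimp_def by simp
    have "act X q m (act X n q x (\<lambda>j. a + \<beta> j)) \<gamma> = act X n m x ((\<lambda>j. a + \<beta> j) \<circ> \<gamma>)"
      using act_act[OF ss x shift_op[OF \<beta>] \<gamma>] .
    also have "\<dots> = act X n m x (\<lambda>j. a + act (Delta_nk_d (b - a) (u - a)) q m \<beta> \<gamma> j)"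
      unfolding Delta_nk_d_def dact_def by (rule act_cong[OF ss x]) simp
    finally show "act X n m x (\<lambda>j. a + act (Delta_nk_d (b - a) (u - a)) q m \<beta> \<gamma> j)
        = act X q m (act X n q x (\<lambda>j. a + \<beta> j)) \<gamma>" by simp
  next
    fix m \<beta> assume \<beta>: "\<beta> \<in> mark (Delta_nk_d (b - a) (u - a)) m"
    then have "is_op m (b - a) \<beta>"
      unfolding Delta_nk_d_def mark_nk_def dsimp_def by (auto split: if_splits)
    note \<beta>op = shift_op[OF this]
    show "act X n m x (\<lambda>j. a + \<beta> j) \<in> mark X m"
    proof (cases "inj_on \<beta> {0..m}")
      case False
      then have "\<not> inj_on (\<lambda>j. a + \<beta> j) {0..m}" unfolding inj_on_def by auto
      then show ?thesis by (rule act_marked_if_not_inj[OF X x \<beta>op])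
    next
      case True
      then have "inj_on (\<lambda>j. a + \<beta> j) {0..m}" unfolding inj_on_def by auto
      then show ?thesis
        using act_marked_iff_face_marked[OF ss x \<beta>op] True
          face_marked_shifted_mark[OF assms(3,4) marked_K marked_faces \<beta>] by blast
    qed
  }
qed

text \<open>Horn filling in a pre-complicial set, transported to the interval face {a..b} of an n-simplex.\<close>
lemma face_marked_horn:
  assumes pc: "pre_complicial X" and x: "x \<in> simp X n"
    and ab: "a + 2 \<le> b" "b \<le> n" "a \<le> u" "u \<le> b"
    and marked_K: "\<And>T. T \<subseteq> {a..b} \<Longrightarrow> 2 \<le> card T \<Longrightarrow>
      {t. a \<le> t \<and> t \<le> b \<and> u \<le> t+1 \<and> t \<le> u+1} \<subseteq> T \<Longrightarrow> face_marked X n x T"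
    and marked_faces: "\<And>v. a \<le> v \<Longrightarrow> v \<le> b \<Longrightarrow> v \<noteq> u \<Longrightarrow> face_marked X n x ({a..b}-{v})"
  shows "face_marked X n x ({a..b}-{u})"
proof -
  define p h where "p = b - a" and "h = u - a"
  define F where "F = (\<lambda>m (\<beta>::nat\<Rightarrow>nat). act X n m x (\<lambda>j. a + \<beta> j))"
  have X: "is_msset X" using pc unfolding pre_complicial_def by blast
  have "rlp (Delta_nk_d p h) (Delta_nk_dd p h) (\<lambda>m a. a) X"
    using pc ab unfolding pre_complicial_def p_def h_def by auto
  moreover have "smap (Delta_nk_d p h) X F"
    unfolding F_def p_def h_def using smap_shifted_face[OF X x ab(3,4,2) marked_K marked_faces] .
  ultimately obtain G where G: "smap (Delta_nk_dd p h) X G"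
    "\<And>m \<beta>. \<beta> \<in> simp (Delta_nk_d p h) m \<Longrightarrow> G m \<beta> = F m \<beta>"
    unfolding rlp_def by blast
  define T where "T = {0..p} - {h}"
  have cT: "card T = p" using ab unfolding T_def p_def h_def by (simp add: card_Diff_singleton)
  have "2 \<le> p" using ab unfolding p_def by simp
  have "finite T" "T \<subseteq> {0..p}" "card T - 1 = p - 1" using cT by (auto simp: T_def)
  moreover have "T \<noteq> {}" using cT \<open>2 \<le> p\<close> by (metis card.empty not_numeral_le_zero)
  ultimately have T: "finite T" "T \<noteq> {}" "T \<subseteq> {0..p}" "card T - 1 = p - 1" by blast+
  note \<delta> = enum_of_enumerates[OF T(1-3), unfolded T(4)]
  have "enum_of T \<in> mark (Delta_nk_dd p h) (p - 1)" unfolding Delta_nk_dd_def using \<delta>(4) by simp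
  then have "G (p - 1) (enum_of T) \<in> mark X (p - 1)" using G(1) unfolding smap_def by blast
  then have "act X n (p - 1) x (\<lambda>j. a + enum_of T j) \<in> mark X (p - 1)"
    using G(2) \<delta>(4) unfolding Delta_nk_d_def F_def by simp
  moreover have "is_op (p - 1) n (\<lambda>j. a + enum_of T j)" using \<delta>(1) ab unfolding is_op_def p_def by auto
  moreover have "inj_on (\<lambda>j. a + enum_of T j) {0..p-1}" using \<delta>(2) unfolding inj_on_def by auto
  moreover have "(\<lambda>j. a + enum_of T j) ` {0..p-1} = {a..b} - {u}"
    using \<delta>(3) ab unfolding image_image[of "(+) a" "enum_of T", symmetric] image_plus_eq
    by (auto simp: T_def p_def h_def)
  ultimately show ?thesis
    using act_marked_iff_face_marked[OF is_msset_is_sset[OF X] x] by metis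
qed

section \<open>Combinatorics of the face \<delta>_k\<close>

lemma two_le_card: "finite T \<Longrightarrow> x \<in> T \<Longrightarrow> y \<in> T \<Longrightarrow> x \<noteq> y \<Longrightarrow> 2 \<le> card T"
  using card_mono[of T "{x,y}"] by auto

text \<open>A T and B T stand for "the face of x, resp. y, spanned by the vertex set T is marked": the
  first two assumptions come from the marked simplices of (\<Delta>^n_k)', the horn assumptions from
  pre-compliciality of X and Y restricted to interval faces {a..b}.\<close>
locale gray_horn =
  fixes n k :: nat and A B :: "nat set \<Rightarrow> bool"
  assumes n2: "2 \<le> n" and kn: "k \<le> n"
  and marked_face_split: "\<And>T s. T \<subseteq> {0..n} \<Longrightarrow> 2 \<le> card T \<Longrightarrow> {t. t \<le> n \<and> k \<le> t+1 \<and> t \<le> k+1} \<subseteq> T \<Longrightarrow> s \<in> T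
      \<Longrightarrow> A {t\<in>T. t \<le> s} \<or> B {t\<in>T. s \<le> t}"
  and codim1_face_split: "\<And>j s. j \<le> n \<Longrightarrow> j \<noteq> k \<Longrightarrow> s \<le> n \<Longrightarrow> s \<noteq> j
      \<Longrightarrow> A {t\<in>{0..n}-{j}. t \<le> s} \<or> B {t\<in>{0..n}-{j}. s \<le> t}"
  and horn_A: "\<And>a b u. a+2 \<le> b \<Longrightarrow> b \<le> n \<Longrightarrow> a \<le> u \<Longrightarrow> u \<le> b \<Longrightarrow>
      (\<And>T. T \<subseteq> {a..b} \<Longrightarrow> 2 \<le> card T \<Longrightarrow> {t. a \<le> t \<and> t \<le> b \<and> u \<le> t+1 \<and> t \<le> u+1} \<subseteq> T \<Longrightarrow> A T) \<Longrightarrow>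
      (\<And>v. a \<le> v \<Longrightarrow> v \<le> b \<Longrightarrow> v \<noteq> u \<Longrightarrow> A ({a..b}-{v})) \<Longrightarrow> A ({a..b}-{u})"
  and horn_B: "\<And>a b u. a+2 \<le> b \<Longrightarrow> b \<le> n \<Longrightarrow> a \<le> u \<Longrightarrow> u \<le> b \<Longrightarrow>
      (\<And>T. T \<subseteq> {a..b} \<Longrightarrow> 2 \<le> card T \<Longrightarrow> {t. a \<le> t \<and> t \<le> b \<and> u \<le> t+1 \<and> t \<le> u+1} \<subseteq> T \<Longrightarrow> B T) \<Longrightarrow>
      (\<And>v. a \<le> v \<Longrightarrow> v \<le> b \<Longrightarrow> v \<noteq> u \<Longrightarrow> B ({a..b}-{v})) \<Longrightarrow> B ({a..b}-{u})"
  and vertex_not_A: "\<And>s. \<not> A {s}" and vertex_not_B: "\<And>s. \<not> B {s}"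
begin

abbreviation "K \<equiv> {t. t \<le> n \<and> k \<le> t+1 \<and> t \<le> k+1}"

lemma B_if_K_subset:
  assumes "T \<subseteq> {0..n}" "2 \<le> card T" "K \<subseteq> T" shows "B T"
proof -
  have f: "finite T" using assms(1) finite_subset by blast
  have ne: "T \<noteq> {}" using assms(2) by auto
  have m: "Min T \<in> T" using f ne by simp
  have "{t\<in>T. t \<le> Min T} = {Min T}" using m Min_le[OF f] le_antisym by blast
  moreover have "{t\<in>T. Min T \<le> t} = T" using f by auto
  ultimately show ?thesis using marked_face_split[OF assms m] vertex_not_A by metis
qed

lemma A_if_K_subset:
  assumes "T \<subseteq> {0..n}" "2 \<le> card T" "K \<subseteq> T" shows "A T"
proof -
  have f: "finite T" using assms(1) finite_subset by blast
  have ne: "T \<noteq> {}" using assms(2) by auto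
  have m: "Max T \<in> T" using f ne by simp
  have "{t\<in>T. Max T \<le> t} = {Max T}" using m Max_ge[OF f] le_antisym by blast
  moreover have "{t\<in>T. t \<le> Max T} = T" using f by auto
  ultimately show ?thesis using marked_face_split[OF assms m] vertex_not_B by metis
qed

lemma split_below:
  assumes "s + 1 < k"
  shows "A {0..s} \<or> B ({s..n}-{k})"
proof (cases "A {0..s}")
  case False
  have "B ({s..n}-{k})"
  proof (rule horn_B[of s n k])
    show "s + 2 \<le> n" "n \<le> n" "s \<le> k" "k \<le> n" using assms kn by auto
  next
    fix T assume T: "T \<subseteq> {s..n}" "2 \<le> card T" "{t. s \<le> t \<and> t \<le> n \<and> k \<le> t+1 \<and> t \<le> k+1} \<subseteq> T"
    have "K \<subseteq> T" using T(3) assms by auto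
    moreover have "T \<subseteq> {0..n}" using T(1) by auto
    ultimately show "B T" using B_if_K_subset T(2) by blast
  next
    fix v assume v: "s \<le> v" "v \<le> n" "v \<noteq> k"
    show "B ({s..n}-{v})"
    proof (cases "v = s")
      case True
      have "2 \<le> card ({s..n}-{v})" using two_le_card[of "{s..n}-{v}" "k-1" k] True assms kn by auto
      moreover have "K \<subseteq> {s..n}-{v}" using True assms by auto
      moreover have "{s..n}-{v} \<subseteq> {0..n}" by auto
      ultimately show ?thesis using B_if_K_subset by blast
    next
      case False
      have "{t\<in>{0..n}-{v}. t \<le> s} = {0..s}" using False v assms kn by auto
      moreover have "{t\<in>{0..n}-{v}. s \<le> t} = {s..n}-{v}" by auto
      ultimately show ?thesis using codim1_face_split[of v s] v False \<open>\<not> A {0..s}\<close> assms kn by auto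
    qed
  qed
  then show ?thesis by simp
qed simp

lemma K_cases: "t \<in> K \<Longrightarrow> t = k - 1 \<or> t = k \<or> t = k + 1" unfolding mem_Collect_eq by arith

lemma split_before:
  assumes "1 \<le> k" shows "A {0..k-1} \<or> B {k..n}"
proof (cases "k = 1")
  case True
  have "{t\<in>{0..n}-{0}. t \<le> 1} = {1}" using n2 by auto
  moreover have "{t\<in>{0..n}-{0}. 1 \<le> t} = {k..n}" using True by auto
  ultimately show ?thesis using codim1_face_split[of 0 1] True n2 vertex_not_A by auto
next
  case False
  then have k2: "2 \<le> k" using assms by simp
  show ?thesis
  proof (cases "B {k..n}")
    case nb: False
    have "A ({0..k}-{k})"
    proof (rule horn_A[of 0 k k])
      show "0 + 2 \<le> k" "k \<le> n" "0 \<le> k" "k \<le> k" using k2 kn by auto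
    next
      fix T assume T: "T \<subseteq> {0..k}" "2 \<le> card T" "{t. 0 \<le> t \<and> t \<le> k \<and> k \<le> t+1 \<and> t \<le> k+1} \<subseteq> T"
      define T' where "T' = T \<union> {k+1..n}"
      have "k \<in> {t. 0 \<le> t \<and> t \<le> k \<and> k \<le> t+1 \<and> t \<le> k+1}" "k - 1 \<in> {t. 0 \<le> t \<and> t \<le> k \<and> k \<le> t+1 \<and> t \<le> k+1}" using k2 by auto
      then have kT: "k \<in> T" "k - 1 \<in> T" using T(3) by blast+
      have s1: "T' \<subseteq> {0..n}" using T(1) kn unfolding T'_def by auto
      have c: "2 \<le> card T'" using card_mono[of T' T] T(2) s1 finite_subset[OF s1] unfolding T'_def by auto
      have K: "K \<subseteq> T'"
      proof
        fix t assume tK: "t \<in> K"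
        then have "t = k - 1 \<or> t = k \<or> t = k + 1" by (rule K_cases)
        then show "t \<in> T'" using kT tK unfolding T'_def by auto
      qed
      have "k \<in> T'" using kT unfolding T'_def by auto
      moreover have "{t\<in>T'. t \<le> k} = T" using T(1) unfolding T'_def by auto
      moreover have "{t\<in>T'. k \<le> t} = {k..n}" using T(1) kT kn unfolding T'_def
        by (auto simp: Suc_le_eq) (metis le_neq_implies_less)
      ultimately show "A T" using marked_face_split[OF s1 c K, of k] nb by auto
    next
      fix v assume v: "0 \<le> v" "v \<le> k" "v \<noteq> k"
      have "{t\<in>{0..n}-{v}. t \<le> k} = {0..k}-{v}" using kn by auto
      moreover have "{t\<in>{0..n}-{v}. k \<le> t} = {k..n}" using v by auto
      ultimately show "A ({0..k}-{v})" using codim1_face_split[of v k] v kn nb by auto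
    qed
    moreover have "{0..k}-{k} = {0..k-1}" using k2 by auto
    ultimately show ?thesis by simp
  qed simp
qed

lemma split_at_pred:
  assumes "1 \<le> k" shows "A {0..k-1} \<or> B ({k-1..n}-{k})"
proof (cases "A {0..k-1}")
  case na: False
  then have b: "B {k..n}" using split_before assms by auto
  have kn1: "k < n"
  proof (rule ccontr)
    assume "\<not> k < n" then have "{k..n} = {n}" using kn by auto
    then show False using b vertex_not_B by simp
  qed
  have "B ({k-1..n}-{k})"
  proof (rule horn_B[of "k-1" n k])
    show "k - 1 + 2 \<le> n" "n \<le> n" "k - 1 \<le> k" "k \<le> n" using kn1 assms by auto
  next
    fix T assume T: "T \<subseteq> {k-1..n}" "2 \<le> card T" "{t. k-1 \<le> t \<and> t \<le> n \<and> k \<le> t+1 \<and> t \<le> k+1} \<subseteq> T"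
    define T' where "T' = T \<union> {0..k-1}"
    have "k - 1 \<in> {t. k-1 \<le> t \<and> t \<le> n \<and> k \<le> t+1 \<and> t \<le> k+1}" using assms kn by auto
    then have kT: "k - 1 \<in> T" using T(3) by blast
    have s1: "T' \<subseteq> {0..n}" using T(1) kn unfolding T'_def by auto
    have c: "2 \<le> card T'" using card_mono[of T' T] T(2) s1 finite_subset[OF s1] unfolding T'_def by auto
    have K: "K \<subseteq> T'" using T(3) unfolding T'_def by auto
    have "k - 1 \<in> T'" using kT unfolding T'_def by auto
    moreover have "{t\<in>T'. t \<le> k - 1} = {0..k-1}" using T(1) kT unfolding T'_def by auto
    moreover have "{t\<in>T'. k - 1 \<le> t} = T" using T(1) kT unfolding T'_def by auto
    ultimately show "B T" using marked_face_split[OF s1 c K, of "k-1"] na by auto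
  next
    fix v assume v: "k - 1 \<le> v" "v \<le> n" "v \<noteq> k"
    show "B ({k-1..n}-{v})"
    proof (cases "v = k - 1")
      case True
      then have "{k-1..n}-{v} = {k..n}" using assms by auto
      then show ?thesis using b by simp
    next
      case False
      have "{t\<in>{0..n}-{v}. t \<le> k - 1} = {0..k-1}" using False v by auto
      moreover have "{t\<in>{0..n}-{v}. k - 1 \<le> t} = {k-1..n}-{v}" by auto
      ultimately show ?thesis using codim1_face_split[of v "k-1"] v False na kn by auto
    qed
  qed
  then show ?thesis by simp
qed simp

lemma split_after:
  assumes "k + 1 \<le> n" shows "A {0..k} \<or> B {k+1..n}"
proof (cases "k + 1 = n")
  case True
  have "{t\<in>{0..n}-{n}. t \<le> n - 1} = {0..k}" using True by auto
  moreover have "{t\<in>{0..n}-{n}. n - 1 \<le> t} = {n-1}" using n2 by auto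
  ultimately show ?thesis using codim1_face_split[of n "n-1"] True n2 vertex_not_B by auto
next
  case False
  then have k2: "k + 2 \<le> n" using assms by simp
  show ?thesis
  proof (cases "A {0..k}")
    case na: False
    have "B ({k..n}-{k})"
    proof (rule horn_B[of k n k])
      show "k + 2 \<le> n" "n \<le> n" "k \<le> k" "k \<le> n" using k2 by auto
    next
      fix T assume T: "T \<subseteq> {k..n}" "2 \<le> card T" "{t. k \<le> t \<and> t \<le> n \<and> k \<le> t+1 \<and> t \<le> k+1} \<subseteq> T"
      define T' where "T' = T \<union> {0..k}"
      have "k \<in> {t. k \<le> t \<and> t \<le> n \<and> k \<le> t+1 \<and> t \<le> k+1}" "k + 1 \<in> {t. k \<le> t \<and> t \<le> n \<and> k \<le> t+1 \<and> t \<le> k+1}" using k2 by auto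
      then have kT: "k \<in> T" "k + 1 \<in> T" using T(3) by blast+
      have s1: "T' \<subseteq> {0..n}" using T(1) kn unfolding T'_def by auto
      have c: "2 \<le> card T'" using card_mono[of T' T] T(2) s1 finite_subset[OF s1] unfolding T'_def by auto
      have K: "K \<subseteq> T'"
      proof
        fix t assume tK: "t \<in> K"
        then have "t = k - 1 \<or> t = k \<or> t = k + 1" by (rule K_cases)
        then show "t \<in> T'" using kT tK unfolding T'_def by auto
      qed
      have "k \<in> T'" using kT unfolding T'_def by auto
      moreover have "{t\<in>T'. t \<le> k} = {0..k}" using T(1) kT unfolding T'_def by auto
      moreover have "{t\<in>T'. k \<le> t} = T" using T(1) kT unfolding T'_def by auto
      ultimately show "B T" using marked_face_split[OF s1 c K, of k] na by auto
    next
      fix v assume v: "k \<le> v" "v \<le> n" "v \<noteq> k"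
      have "{t\<in>{0..n}-{v}. t \<le> k} = {0..k}" using v by auto
      moreover have "{t\<in>{0..n}-{v}. k \<le> t} = {k..n}-{v}" by auto
      ultimately show "B ({k..n}-{v})" using codim1_face_split[of v k] v kn na by auto
    qed
    moreover have "{k..n}-{k} = {k+1..n}" by auto
    ultimately show ?thesis by simp
  qed simp
qed

lemma split_at_succ:
  assumes "k + 1 \<le> n" shows "A ({0..k+1}-{k}) \<or> B {k+1..n}"
proof (cases "B {k+1..n}")
  case nb: False
  then have a: "A {0..k}" using split_after assms by auto
  have k1: "1 \<le> k"
  proof (rule ccontr)
    assume "\<not> 1 \<le> k" then have "{0..k} = {0}" by auto
    then show False using a vertex_not_A by simp
  qed
  have "A ({0..k+1}-{k})"
  proof (rule horn_A[of 0 "k+1" k])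
    show "0 + 2 \<le> k + 1" "k + 1 \<le> n" "0 \<le> k" "k \<le> k + 1" using k1 assms by auto
  next
    fix T assume T: "T \<subseteq> {0..k+1}" "2 \<le> card T" "{t. 0 \<le> t \<and> t \<le> k+1 \<and> k \<le> t+1 \<and> t \<le> k+1} \<subseteq> T"
    define T' where "T' = T \<union> {k+1..n}"
    have "k + 1 \<in> {t. 0 \<le> t \<and> t \<le> k+1 \<and> k \<le> t+1 \<and> t \<le> k+1}" by simp
    then have kT: "k + 1 \<in> T" using T(3) by blast
    have s1: "T' \<subseteq> {0..n}" using T(1) assms unfolding T'_def by auto
    have c: "2 \<le> card T'" using card_mono[of T' T] T(2) s1 finite_subset[OF s1] unfolding T'_def by auto
    have K: "K \<subseteq> T'" using T(3) unfolding T'_def by auto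
    have "k + 1 \<in> T'" using kT unfolding T'_def by auto
    moreover have "{t\<in>T'. t \<le> k + 1} = T" using T(1) kT unfolding T'_def by auto
    moreover have "{t\<in>T'. k + 1 \<le> t} = {k+1..n}" using T(1) kT assms unfolding T'_def by auto
    ultimately show "A T" using marked_face_split[OF s1 c K, of "k+1"] nb by auto
  next
    fix v assume v: "0 \<le> v" "v \<le> k + 1" "v \<noteq> k"
    show "A ({0..k+1}-{v})"
    proof (cases "v = k + 1")
      case True
      then have "{0..k+1}-{v} = {0..k}" by auto
      then show ?thesis using a by simp
    next
      case False
      have "{t\<in>{0..n}-{v}. t \<le> k + 1} = {0..k+1}-{v}" using assms by auto
      moreover have "{t\<in>{0..n}-{v}. k + 1 \<le> t} = {k+1..n}" using False v by auto
      ultimately show ?thesis using codim1_face_split[of v "k+1"] v False nb assms by auto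
    qed
  qed
  then show ?thesis by simp
qed simp

lemma split_above:
  assumes "k + 1 < s" "s \<le> n" shows "A ({0..s}-{k}) \<or> B {s..n}"
proof (cases "B {s..n}")
  case nb: False
  have "A ({0..s}-{k})"
  proof (rule horn_A[of 0 s k])
    show "0 + 2 \<le> s" "s \<le> n" "0 \<le> k" "k \<le> s" using assms by auto
  next
    fix T assume T: "T \<subseteq> {0..s}" "2 \<le> card T" "{t. 0 \<le> t \<and> t \<le> s \<and> k \<le> t+1 \<and> t \<le> k+1} \<subseteq> T"
    have "K \<subseteq> T" using T(3) assms by auto
    moreover have "T \<subseteq> {0..n}" using T(1) assms by auto
    ultimately show "A T" using A_if_K_subset T(2) by blast
  next
    fix v assume v: "0 \<le> v" "v \<le> s" "v \<noteq> k"
    show "A ({0..s}-{v})"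
    proof (cases "v = s")
      case True
      have "2 \<le> card ({0..s}-{v})" using two_le_card[of "{0..s}-{v}" k "k+1"] True assms by auto
      moreover have "K \<subseteq> {0..s}-{v}" using True assms by auto
      moreover have "{0..s}-{v} \<subseteq> {0..n}" using assms by auto
      ultimately show ?thesis using A_if_K_subset by blast
    next
      case False
      have "{t\<in>{0..n}-{v}. t \<le> s} = {0..s}-{v}" using assms by auto
      moreover have "{t\<in>{0..n}-{v}. s \<le> t} = {s..n}" using False v by auto
      ultimately show ?thesis using codim1_face_split[of v s] v False nb assms by auto
    qed
  qed
  then show ?thesis by simp
qed simp

lemma delta_k_split:
  assumes "s \<le> n" "s \<noteq> k"
  shows "A {t\<in>{0..n}-{k}. t \<le> s} \<or> B {t\<in>{0..n}-{k}. s \<le> t}"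
proof -
  consider "s + 1 < k" | "s + 1 = k" | "s = k + 1" | "k + 1 < s" using assms(2) by linarith
  then show ?thesis
  proof cases
    case 1
    then have "{t\<in>{0..n}-{k}. t \<le> s} = {0..s}" "{t\<in>{0..n}-{k}. s \<le> t} = {s..n}-{k}" using kn by auto
    then show ?thesis using split_below[OF 1] by simp
  next
    case 2
    then have "{t\<in>{0..n}-{k}. t \<le> s} = {0..k-1}" "{t\<in>{0..n}-{k}. s \<le> t} = {k-1..n}-{k}" using kn by auto
    then show ?thesis using split_at_pred 2 by auto
  next
    case 3
    then have "{t\<in>{0..n}-{k}. t \<le> s} = {0..k+1}-{k}" "{t\<in>{0..n}-{k}. s \<le> t} = {k+1..n}" using assms by auto
    then show ?thesis using split_at_succ 3 assms by auto
  next
    case 4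
    then have "{t\<in>{0..n}-{k}. t \<le> s} = {0..s}-{k}" "{t\<in>{0..n}-{k}. s \<le> t} = {s..n}" using assms by auto
    then show ?thesis using split_above 4 assms by auto
  qed
qed

end

section \<open>The Gray tensor product\<close>

lemma image_front_face:
  assumes "is_op m n \<alpha>" "inj_on \<alpha> {0..m}" "i \<le> m"
  shows "(\<alpha> \<circ> (\<lambda>j. j)) ` {0..i} = {t\<in>\<alpha> ` {0..m}. t \<le> \<alpha> i}"
proof
  show "(\<alpha> \<circ> (\<lambda>j. j)) ` {0..i} \<subseteq> {t\<in>\<alpha> ` {0..m}. t \<le> \<alpha> i}"
    using assms unfolding is_op_def by auto
next
  show "{t\<in>\<alpha> ` {0..m}. t \<le> \<alpha> i} \<subseteq> (\<alpha> \<circ> (\<lambda>j. j)) ` {0..i}"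
  proof
    fix t assume "t \<in> {t\<in>\<alpha> ` {0..m}. t \<le> \<alpha> i}"
    then obtain j where j: "j \<le> m" "t = \<alpha> j" "\<alpha> j \<le> \<alpha> i" by auto
    have "j \<le> i"
    proof (rule ccontr)
      assume "\<not> j \<le> i" then have "\<alpha> i < \<alpha> j" using op_strict_mono[OF assms(1,2), of i j] j by simp
      then show False using j(3) by simp
    qed
    then show "t \<in> (\<alpha> \<circ> (\<lambda>j. j)) ` {0..i}" using j by auto
  qed
qed

lemma image_back_face:
  assumes "is_op m n \<alpha>" "inj_on \<alpha> {0..m}" "i \<le> m"
  shows "(\<alpha> \<circ> (\<lambda>j. i + j)) ` {0..m - i} = {t\<in>\<alpha> ` {0..m}. \<alpha> i \<le> t}"
proof
  show "(\<alpha> \<circ> (\<lambda>j. i + j)) ` {0..m - i} \<subseteq> {t\<in>\<alpha> ` {0..m}. \<alpha> i \<le> t}"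
    using assms unfolding is_op_def by auto
next
  show "{t\<in>\<alpha> ` {0..m}. \<alpha> i \<le> t} \<subseteq> (\<alpha> \<circ> (\<lambda>j. i + j)) ` {0..m - i}"
  proof
    fix t assume "t \<in> {t\<in>\<alpha> ` {0..m}. \<alpha> i \<le> t}"
    then obtain j where j: "j \<le> m" "t = \<alpha> j" "\<alpha> i \<le> \<alpha> j" by auto
    have "i \<le> j"
    proof (rule ccontr)
      assume "\<not> i \<le> j" then have "\<alpha> j < \<alpha> i" using op_strict_mono[OF assms(1,2), of j i] assms(3) by simp
      then show False using j(3) by simp
    qed
    then have "t = (\<alpha> \<circ> (\<lambda>j. i + j)) (j - i)" "j - i \<in> {0..m - i}" using j by auto
    then show "t \<in> (\<alpha> \<circ> (\<lambda>j. i + j)) ` {0..m - i}" by blast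
  qed
qed

lemma cloven_act_iff:
  assumes ssX: "is_sset X" and ssY: "is_sset Y" and x: "x \<in> simp X n" and y: "y \<in> simp Y n"
    and op: "is_op m n \<alpha>" and inj: "inj_on \<alpha> {0..m}" and i: "i \<le> m"
  shows "cloven X Y m i (act X n m x \<alpha>, act Y n m y \<alpha>) \<longleftrightarrow>
    face_marked X n x {t\<in>\<alpha> ` {0..m}. t \<le> \<alpha> i} \<or> face_marked Y n y {t\<in>\<alpha> ` {0..m}. \<alpha> i \<le> t}"
proof -
  have o1: "is_op i m (\<lambda>j. j)" using i unfolding is_op_def by auto
  have o2: "is_op (m - i) m (\<lambda>j. i + j)" using i unfolding is_op_def by auto
  have o1': "is_op i n (\<alpha> \<circ> (\<lambda>j. j))" using op i unfolding is_op_def by auto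
  have o2': "is_op (m - i) n (\<alpha> \<circ> (\<lambda>j. i + j))" using op i unfolding is_op_def by auto
  have i1: "inj_on (\<alpha> \<circ> (\<lambda>j. j)) {0..i}" using inj i unfolding inj_on_def by auto
  have i2: "inj_on (\<alpha> \<circ> (\<lambda>j. i + j)) {0..m - i}" unfolding inj_on_def
  proof (intro ballI impI)
    fix a b assume ab: "a \<in> {0..m - i}" "b \<in> {0..m - i}" "(\<alpha> \<circ> (\<lambda>j. i + j)) a = (\<alpha> \<circ> (\<lambda>j. i + j)) b"
    have "i + a \<in> {0..m}" "i + b \<in> {0..m}" using ab(1,2) i by auto
    moreover have "\<alpha> (i + a) = \<alpha> (i + b)" using ab(3) by simp
    ultimately have "i + a = i + b" using inj unfolding inj_on_def by blast
    then show "a = b" by simp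
  qed
  have "act X m i (act X n m x \<alpha>) (\<lambda>j. j) \<in> mark X i \<longleftrightarrow> face_marked X n x {t\<in>\<alpha> ` {0..m}. t \<le> \<alpha> i}"
    unfolding act_act[OF ssX x op o1] act_marked_iff_face_marked[OF ssX x o1' i1] image_front_face[OF op inj i] ..
  moreover have "act Y m (m - i) (act Y n m y \<alpha>) (\<lambda>j. i + j) \<in> mark Y (m - i) \<longleftrightarrow> face_marked Y n y {t\<in>\<alpha> ` {0..m}. \<alpha> i \<le> t}"
    unfolding act_act[OF ssY y op o2] act_marked_iff_face_marked[OF ssY y o2' i2] image_back_face[OF op inj i] ..
  ultimately show ?thesis unfolding cloven_def by simp
qed

lemma is_sset_gray:
  assumes X: "is_sset X" and Y: "is_sset Y" shows "is_sset (gray X Y)"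
  unfolding is_sset_def
proof (intro conjI allI impI)
  fix n m :: nat and xy \<alpha> assume "xy \<in> simp (gray X Y) n" "is_op m n \<alpha>"
  then show "act (gray X Y) n m xy \<alpha> \<in> simp (gray X Y) m"
    unfolding gray_def using act_in_simp[OF X] act_in_simp[OF Y] by auto
next
  fix n xy assume "xy \<in> simp (gray X Y) n"
  then show "act (gray X Y) n n xy (\<lambda>i. i) = xy"
    unfolding gray_def using act_id[OF X] act_id[OF Y] by (cases xy) auto
next
  fix n m k :: nat and xy \<alpha> \<beta> assume "xy \<in> simp (gray X Y) n" "is_op m n \<alpha>" "is_op k m \<beta>"
  then show "act (gray X Y) m k (act (gray X Y) n m xy \<alpha>) \<beta> = act (gray X Y) n k xy (\<alpha> \<circ> \<beta>)"
    unfolding gray_def using act_act[OF X] act_act[OF Y] by auto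
next
  fix n m :: nat and xy and \<alpha> \<alpha>' :: "nat \<Rightarrow> nat" assume "xy \<in> simp (gray X Y) n" "\<forall>i\<le>m. \<alpha> i = \<alpha>' i"
  then show "act (gray X Y) n m xy \<alpha> = act (gray X Y) n m xy \<alpha>'"
    unfolding gray_def using act_cong[OF X, of "fst xy" n m \<alpha> \<alpha>'] act_cong[OF Y, of "snd xy" n m \<alpha> \<alpha>'] by auto
qed

lemma is_msset_gray:
  assumes X: "is_msset X" and Y: "is_msset Y" shows "is_msset (gray X Y)"
proof -
  have sX: "is_sset X" and sY: "is_sset Y" using X Y by (auto intro: is_msset_is_sset)
  have m0X: "mark X 0 = {}" and m0Y: "mark Y 0 = {}" using X Y unfolding is_msset_def by auto
  have "\<forall>n x. x \<in> simp (gray X Y) n \<longrightarrow> degenerate (gray X Y) n x \<longrightarrow> x \<in> mark (gray X Y) n"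
  proof (intro allI impI)
    fix n xy assume xy: "xy \<in> simp (gray X Y) n" and dg: "degenerate (gray X Y) n xy"
    obtain m z \<sigma> where m: "m < n" and z: "z \<in> simp (gray X Y) m" and \<sigma>: "is_op n m \<sigma>"
      and e: "xy = act (gray X Y) m n z \<sigma>"
      using dg unfolding degenerate_def by blast
    have zx: "fst z \<in> simp X m" and zy: "snd z \<in> simp Y m" using z unfolding gray_def by auto
    have ex: "fst xy = act X m n (fst z) \<sigma>" and ey: "snd xy = act Y m n (snd z) \<sigma>"
      using e unfolding gray_def by auto
    have ni: "\<not> inj_on \<sigma> {0..n}"
    proof
      assume "inj_on \<sigma> {0..n}"
      then have "card (\<sigma> ` {0..n}) = Suc n" by (rule card_inj_image_atLeastAtMost)
      moreover have "\<sigma> ` {0..n} \<subseteq> {0..m}" using \<sigma> unfolding is_op_def by auto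
      then have "card (\<sigma> ` {0..n}) \<le> Suc m" using card_mono[of "{0..m}"] by fastforce
      ultimately show False using m by simp
    qed
    obtain j where j: "j < n" "\<sigma> j = \<sigma> (Suc j)" using not_inj_op_adjacent_eq[OF \<sigma> ni] by blast
    have "cloven X Y n i xy" if i: "i \<le> n" for i
    proof (cases "j < i")
      case True
      have o1: "is_op i n (\<lambda>t. t)" using i unfolding is_op_def by auto
      have o2: "is_op i m (\<sigma> \<circ> (\<lambda>t. t))" using \<sigma> i unfolding is_op_def by auto
      have "\<not> inj_on (\<sigma> \<circ> (\<lambda>t. t)) {0..i}" using j True unfolding inj_on_def
        by (metis Suc_le_eq atLeastAtMost_iff comp_apply less_imp_le_nat n_not_Suc_n zero_le)
      then have "act X m i (fst z) (\<sigma> \<circ> (\<lambda>t. t)) \<in> mark X i" by (rule act_marked_if_not_inj[OF X zx o2])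
      then show ?thesis unfolding cloven_def ex act_act[OF sX zx \<sigma> o1] by simp
    next
      case False
      have o1: "is_op (n - i) n (\<lambda>t. i + t)" using i unfolding is_op_def by auto
      have o2: "is_op (n - i) m (\<sigma> \<circ> (\<lambda>t. i + t))" using \<sigma> i unfolding is_op_def by auto
      have a1: "j - i \<in> {0..n - i}" "Suc (j - i) \<in> {0..n - i}" using j False by auto
      have "(\<sigma> \<circ> (\<lambda>t. i + t)) (j - i) = (\<sigma> \<circ> (\<lambda>t. i + t)) (Suc (j - i))" using j False by simp
      then have "\<not> inj_on (\<sigma> \<circ> (\<lambda>t. i + t)) {0..n - i}" using a1 unfolding inj_on_def by fastforce
      then have "act Y m (n - i) (snd z) (\<sigma> \<circ> (\<lambda>t. i + t)) \<in> mark Y (n - i)" by (rule act_marked_if_not_inj[OF Y zy o2])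
      then show ?thesis unfolding cloven_def ey act_act[OF sY zy \<sigma> o1] by simp
    qed
    then show "xy \<in> mark (gray X Y) n" using xy unfolding gray_def by auto
  qed
  moreover have "mark (gray X Y) 0 = {}" unfolding gray_def cloven_def using m0X m0Y by auto
  moreover have "\<forall>n. mark (gray X Y) n \<subseteq> simp (gray X Y) n" unfolding gray_def by auto
  ultimately show ?thesis unfolding is_msset_def using is_sset_gray[OF sX sY] by blast
qed

section \<open>Lifting against (\<Delta>^n_k)' \<rightarrow> (\<Delta>^n_k)''\<close>

lemma gray_act_marked_iff:
  assumes X: "is_sset X" and Y: "is_sset Y" and x: "x \<in> simp X n" and y: "y \<in> simp Y n"
    and \<alpha>: "is_op m n \<alpha>" "inj_on \<alpha> {0..m}"
  shows "(act X n m x \<alpha>, act Y n m y \<alpha>) \<in> mark (gray X Y) m \<longleftrightarrow>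
    (\<forall>s\<in>\<alpha> ` {0..m}. face_marked X n x {t\<in>\<alpha> ` {0..m}. t \<le> s} \<or>
                     face_marked Y n y {t\<in>\<alpha> ` {0..m}. s \<le> t})"
proof -
  have "act X n m x \<alpha> \<in> simp X m" "act Y n m y \<alpha> \<in> simp Y m"
    using act_in_simp[OF X x \<alpha>(1)] act_in_simp[OF Y y \<alpha>(1)] .
  then have "(act X n m x \<alpha>, act Y n m y \<alpha>) \<in> mark (gray X Y) m \<longleftrightarrow>
      (\<forall>i\<le>m. cloven X Y m i (act X n m x \<alpha>, act Y n m y \<alpha>))"
    unfolding gray_def by auto
  also have "\<dots> \<longleftrightarrow> (\<forall>i\<le>m. face_marked X n x {t\<in>\<alpha> ` {0..m}. t \<le> \<alpha> i} \<or>
                                face_marked Y n y {t\<in>\<alpha> ` {0..m}. \<alpha> i \<le> t})"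
    using cloven_act_iff[OF X Y x y \<alpha>] by simp
  finally show ?thesis by auto
qed

lemma smap_Delta_nk_d_act:
  assumes f: "smap (Delta_nk_d n k) Z f" and \<alpha>: "\<alpha> \<in> dsimp n m"
  shows "f m \<alpha> = act Z n m (f n (\<lambda>j. if j \<le> n then j else 0)) \<alpha>"
proof -
  define top :: "nat \<Rightarrow> nat" where "top = (\<lambda>j. if j \<le> n then j else 0)"
  have "top \<in> dsimp n n" unfolding top_def dsimp_def is_op_def by auto
  moreover have "is_op m n \<alpha>" using \<alpha> unfolding dsimp_def by simp
  ultimately have "f m (dact n m top \<alpha>) = act Z n m (f n top) \<alpha>"
    using f unfolding smap_def Delta_nk_d_def by simp
  moreover have "dact n m top \<alpha> = \<alpha>"
    using \<alpha> unfolding top_def dact_def dsimp_def is_op_def by auto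
  ultimately show ?thesis unfolding top_def by simp
qed

lemma mark_Delta_nk_dd_cases:
  assumes n: "2 \<le> n" and \<alpha>: "\<alpha> \<in> mark (Delta_nk_dd n k) m"
  shows "\<alpha> \<in> mark (Delta_nk_d n k) m \<or>
    (m = n - 1 \<and> \<alpha> \<in> dsimp n m \<and> inj_on \<alpha> {0..m} \<and> \<alpha> ` {0..m} = {0..n} - {k})"
proof (cases "\<alpha> \<in> mark (Delta_nk_d n k) m")
  case not_d: False
  then have m: "m = n - 1" and \<alpha>_simp: "\<alpha> \<in> dsimp n m" and "\<alpha> \<notin> mark_nk n k m"
    using \<alpha> unfolding Delta_nk_dd_def Delta_nk_d_def by (auto split: if_splits)
  then have inj: "inj_on \<alpha> {0..m}" using n unfolding mark_nk_def by auto
  have sub: "\<alpha> ` {0..m} \<subseteq> {0..n}" using \<alpha>_simp unfolding dsimp_def is_op_def by auto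
  have "card ({0..n} - \<alpha> ` {0..m}) = 1"
    using card_Diff_subset[OF finite_subset[OF sub] sub] card_inj_image_atLeastAtMost[OF inj] m n
    by simp
  then obtain j where j: "{0..n} - \<alpha> ` {0..m} = {j}" by (auto simp: card_1_singleton_iff)
  then have img: "\<alpha> ` {0..m} = {0..n} - {j}" and "j \<le> n" using sub by auto
  then have "j = k" using not_d \<alpha>_simp inj m unfolding Delta_nk_d_def by auto
  then show ?thesis using m \<alpha>_simp inj img by blast
qed simp

lemma gray_horn_of_smap:
  assumes pcX: "pre_complicial X" and pcY: "pre_complicial Y" and "2 \<le> n" "k \<le> n"
    and f: "smap (Delta_nk_d n k) (gray X Y) f" and x: "x \<in> simp X n" and y: "y \<in> simp Y n"
    and f_eq: "\<And>m \<alpha>. \<alpha> \<in> dsimp n m \<Longrightarrow> f m \<alpha> = (act X n m x \<alpha>, act Y n m y \<alpha>)"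
  shows "gray_horn n k (face_marked X n x) (face_marked Y n y)"
proof -
  have X: "is_msset X" and Y: "is_msset Y" using pcX pcY unfolding pre_complicial_def by auto
  have ssX: "is_sset X" and ssY: "is_sset Y" using X Y by (auto intro: is_msset_is_sset)
  have split: "face_marked X n x {t\<in>T. t \<le> s} \<or> face_marked Y n y {t\<in>T. s \<le> t}"
    if T: "T \<subseteq> {0..n}" "enum_of T \<in> mark (Delta_nk_d n k) (card T - 1)" and s: "s \<in> T" for T s
  proof -
    have "finite T" "T \<noteq> {}" using T(1) s finite_subset by auto
    note T_enum = enum_of_enumerates[OF this T(1)]
    have "f (card T - 1) (enum_of T) \<in> mark (gray X Y) (card T - 1)"
      using f T(2) unfolding smap_def by blast
    then show ?thesis
      using gray_act_marked_iff[OF ssX ssY x y T_enum(1,2)] f_eq[OF T_enum(4)] s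
      unfolding T_enum(3) by auto
  qed
  show ?thesis
  proof (unfold_locales)
    show "2 \<le> n" "k \<le> n" by fact+
  next
    fix T s assume T: "T \<subseteq> {0..n}" "2 \<le> card T" "{t. t \<le> n \<and> k \<le> t + 1 \<and> t \<le> k + 1} \<subseteq> T" "s \<in> T"
    have "finite T" "T \<noteq> {}" using T(1,4) finite_subset by auto
    note T_enum = enum_of_enumerates[OF this T(1)]
    have "enum_of T \<in> mark (Delta_nk_d n k) (card T - 1)"
      unfolding Delta_nk_d_def mark_nk_def using T_enum(3,4) T(2,3) by auto
    then show "face_marked X n x {t \<in> T. t \<le> s} \<or> face_marked Y n y {t \<in> T. s \<le> t}"
      using split T(1,4) by blast
  next
    fix j s assume js: "j \<le> n" "j \<noteq> k" "s \<le> n" "s \<noteq> j"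
    define T where "T = {0..n} - {j}"
    have T: "T \<subseteq> {0..n}" "finite T" "T \<noteq> {}" "s \<in> T" "card T - 1 = n - 1"
      using js unfolding T_def by (auto simp: card_Diff_singleton)
    note T_enum = enum_of_enumerates[OF T(2,3,1)]
    have "enum_of T \<in> mark (Delta_nk_d n k) (card T - 1)"
      unfolding Delta_nk_d_def T(5) using T_enum(2,3,4) js(1,2) unfolding T(5) T_def by auto
    then show "face_marked X n x {t \<in> {0..n} - {j}. t \<le> s} \<or>
        face_marked Y n y {t \<in> {0..n} - {j}. s \<le> t}"
      using split[OF T(1) _ T(4)] unfolding T_def by blast
  next
    fix a b u assume "a + 2 \<le> b" "b \<le> n" "a \<le> u" "u \<le> b"
      "\<And>T. T \<subseteq> {a..b} \<Longrightarrow> 2 \<le> card T \<Longrightarrow> {t. a \<le> t \<and> t \<le> b \<and> u \<le> t + 1 \<and> t \<le> u + 1} \<subseteq> T \<Longrightarrow>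
         face_marked X n x T"
      "\<And>v. a \<le> v \<Longrightarrow> v \<le> b \<Longrightarrow> v \<noteq> u \<Longrightarrow> face_marked X n x ({a..b} - {v})"
    then show "face_marked X n x ({a..b} - {u})" by (rule face_marked_horn[OF pcX x])
  next
    fix a b u assume "a + 2 \<le> b" "b \<le> n" "a \<le> u" "u \<le> b"
      "\<And>T. T \<subseteq> {a..b} \<Longrightarrow> 2 \<le> card T \<Longrightarrow> {t. a \<le> t \<and> t \<le> b \<and> u \<le> t + 1 \<and> t \<le> u + 1} \<subseteq> T \<Longrightarrow>
         face_marked Y n y T"
      "\<And>v. a \<le> v \<Longrightarrow> v \<le> b \<Longrightarrow> v \<noteq> u \<Longrightarrow> face_marked Y n y ({a..b} - {v})"
    then show "face_marked Y n y ({a..b} - {u})" by (rule face_marked_horn[OF pcY y])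
  next
    fix s show "\<not> face_marked X n x {s}" "\<not> face_marked Y n y {s}"
      using X Y unfolding face_marked_def is_msset_def by simp_all
  qed
qed

lemma rlp_gray:
  assumes pcX: "pre_complicial X" and pcY: "pre_complicial Y" and n: "2 \<le> n" "k \<le> n"
  shows "rlp (Delta_nk_d n k) (Delta_nk_dd n k) (\<lambda>m a. a) (gray X Y)"
  unfolding rlp_def
proof (intro allI impI)
  fix f assume f: "smap (Delta_nk_d n k) (gray X Y) f"
  txt \<open>Both markings live on the same simplicial set, so f itself is the lift.\<close>
  define z where "z = f n (\<lambda>j. if j \<le> n then j else 0)"
  have "(\<lambda>j. if j \<le> n then j else 0) \<in> dsimp n n" unfolding dsimp_def is_op_def by auto
  then have "z \<in> simp (gray X Y) n" using f unfolding z_def smap_def Delta_nk_d_def by simp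
  then have x: "fst z \<in> simp X n" and y: "snd z \<in> simp Y n" unfolding gray_def by auto
  have f_eq: "f m \<alpha> = (act X n m (fst z) \<alpha>, act Y n m (snd z) \<alpha>)" if "\<alpha> \<in> dsimp n m" for m \<alpha>
    using smap_Delta_nk_d_act[OF f that] unfolding z_def gray_def by simp
  interpret gray_horn n k "face_marked X n (fst z)" "face_marked Y n (snd z)"
    using gray_horn_of_smap[OF pcX pcY n f x y f_eq] .
  have "f m \<alpha> \<in> mark (gray X Y) m" if "\<alpha> \<in> mark (Delta_nk_dd n k) m" for m \<alpha>
    using mark_Delta_nk_dd_cases[OF n(1) that]
  proof (elim disjE conjE)
    assume "\<alpha> \<in> mark (Delta_nk_d n k) m"
    then show ?thesis using f unfolding smap_def by blast
  next
    assume "m = n - 1" and \<alpha>: "\<alpha> \<in> dsimp n m" "inj_on \<alpha> {0..m}" "\<alpha> ` {0..m} = {0..n} - {k}"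
    have "is_op m n \<alpha>" using \<alpha>(1) unfolding dsimp_def by simp
    then show ?thesis
      using gray_act_marked_iff[OF _ _ x y _ \<alpha>(2)] f_eq[OF \<alpha>(1)] \<alpha>(3) delta_k_split pcX pcY
      unfolding pre_complicial_def is_msset_def by simp
  qed
  then show "\<exists>g. smap (Delta_nk_dd n k) (gray X Y) g \<and>
      (\<forall>m a. a \<in> simp (Delta_nk_d n k) m \<longrightarrow> g m a = f m a)"
    using f unfolding smap_def Delta_nk_dd_def Delta_nk_d_def by (intro exI[of _ f]) simp
qed

theorem theorem1p24:
  fixes X :: "'a msset" and Y :: "'b msset"
  assumes "pre_complicial X" and "pre_complicial Y"
  shows "pre_complicial (gray X Y)"
  using assms is_msset_gray rlp_gray unfolding pre_complicial_def by blast

end
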